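(* Let $\theta\in(0,\pi)$ and let $C$ be the domain $C=\mathbb{C}\setminus\bigcup_{n\in\mathbb{Z}}\{n+iy:|y|\ge b_n\}$, where $b_0=1$ and $b_n=|n|\tan(\theta/2)$ for $n\in\mathbb{Z}\setminus\{0\}$. For $t>1$, let $J_t$ be the connected component of $C\cap\{|z|=t\}$ containing the point $t$, and define $\Theta(t)$ by $t\Theta(t)=l(J_t)$, where $l(J_t)$ is the length of the arc $J_t$. Then $\lim_{t\to+\infty}\Theta(t)=\theta$. *)

theory Defs
  imports "HOL-Analysis.Analysis"
begin

definition slit_height :: "real \<Rightarrow> int \<Rightarrow> real" where
  "slit_height \<theta> n = (if n = 0 then 1 else real_of_int \<bar>n\<bar> * tan (\<theta> / 2))"

definition slit_domain :: "real \<Rightarrow> complex set" where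
  "slit_domain \<theta> = UNIV - (\<Union>n::int. {z. Re z = of_int n \<and> \<bar>Im z\<bar> \<ge> slit_height \<theta> n})"

definition arcJ :: "real \<Rightarrow> real \<Rightarrow> complex set" where
  "arcJ \<theta> t = connected_component_set (slit_domain \<theta> \<inter> sphere 0 t) (complex_of_real t)"

definition circle_arc_length :: "real \<Rightarrow> complex set \<Rightarrow> real" where
  "circle_arc_length t J = t * measure lborel {\<phi> \<in> {-pi<..pi}. complex_of_real t * cis \<phi> \<in> J}"

definition Theta :: "real \<Rightarrow> real \<Rightarrow> real" where
  "Theta \<theta> t = circle_arc_length t (arcJ \<theta> t) / t"

end

theory Submission
  imports Defs
begin

text \<open>For large t put c = cos(\<theta>/2) and n = \<lfloor>t c\<rfloor>. The slit over an integer m \<ge> 1 meets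
  the circle |z| = t exactly when m \<le> t c, since its tip m + i m tan(\<theta>/2) lies on the ray of
  argument \<theta>/2. Hence the slits right of n miss the circle, the slit over n cuts it, and
  J_t is the arc Re z > n, of angle 2 arccos(n/t). As n/t \<rightarrow> c, \<Theta>(t) \<rightarrow> 2 arccos c = \<theta>.\<close>

lemma cos_half_bounds:
  fixes \<theta> :: real
  assumes "0 < \<theta>" "\<theta> < pi"
  shows "0 < cos (\<theta>/2)" "cos (\<theta>/2) < 1"
proof -
  show "0 < cos (\<theta>/2)" using assms by (intro cos_gt_zero_pi) auto
  have "cos (\<theta>/2) < cos 0" using assms by (intro cos_monotone_0_pi) auto
  then show "cos (\<theta>/2) < 1" by simp
qed

lemma less_cos_iff_abs_less_arccos:
  fixes \<phi> r :: real
  assumes "-pi \<le> \<phi>" "\<phi> \<le> pi" "-1 \<le> r" "r \<le> 1"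
  shows "r < cos \<phi> \<longleftrightarrow> \<bar>\<phi>\<bar> < arccos r"
proof -
  have cos_abs: "cos \<phi> = cos \<bar>\<phi>\<bar>" by (simp add: abs_if)
  have arccos: "0 \<le> arccos r" "arccos r \<le> pi" "cos (arccos r) = r"
    using arccos_bounded assms by auto
  show ?thesis
  proof
    assume "\<bar>\<phi>\<bar> < arccos r"
    then have "cos (arccos r) < cos \<bar>\<phi>\<bar>"
      by (rule cos_monotone_0_pi[OF abs_ge_zero _ arccos(2)])
    then show "r < cos \<phi>" using cos_abs arccos by linarith
  next
    assume "r < cos \<phi>"
    show "\<bar>\<phi>\<bar> < arccos r"
    proof (rule ccontr)
      assume "\<not> \<bar>\<phi>\<bar> < arccos r"
      then have "cos \<bar>\<phi>\<bar> \<le> cos (arccos r)"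
        using assms(1,2) by (intro cos_monotone_0_pi_le[OF arccos(1)]) auto
      then show False using \<open>r < cos \<phi>\<close> cos_abs arccos by linarith
    qed
  qed
qed

lemma less_Re_cis_iff:
  fixes t r \<phi> :: real
  assumes "0 < t" "\<bar>r\<bar> \<le> t" "-pi \<le> \<phi>" "\<phi> \<le> pi"
  shows "r < Re (complex_of_real t * cis \<phi>) \<longleftrightarrow> \<bar>\<phi>\<bar> < arccos (r / t)"
proof -
  have "r < Re (complex_of_real t * cis \<phi>) \<longleftrightarrow> r / t < cos \<phi>"
    using assms(1) by (simp add: divide_less_eq mult.commute)
  also have "\<dots> \<longleftrightarrow> \<bar>\<phi>\<bar> < arccos (r / t)"
    using assms by (intro less_cos_iff_abs_less_arccos) (auto simp: divide_simps)
  finally show ?thesis .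
qed

lemma sphere_Re_greater_eq_image_cis:
  fixes t r :: real
  assumes "0 < t" "\<bar>r\<bar> \<le> t"
  defines "a \<equiv> arccos (r / t)"
  shows "{z \<in> sphere 0 t. r < Re z} = (\<lambda>\<phi>. complex_of_real t * cis \<phi>) ` {-a<..<a}"
proof
  have "a \<le> pi" unfolding a_def using arccos_bounded assms by (auto simp: divide_simps)
  then show "(\<lambda>\<phi>. complex_of_real t * cis \<phi>) ` {-a<..<a} \<subseteq> {z \<in> sphere 0 t. r < Re z}"
    using assms(1) less_Re_cis_iff[OF assms(1,2)] by (auto simp: norm_mult a_def)
  show "{z \<in> sphere 0 t. r < Re z} \<subseteq> (\<lambda>\<phi>. complex_of_real t * cis \<phi>) ` {-a<..<a}"
  proof
    fix z assume z: "z \<in> {z \<in> sphere 0 t. r < Re z}"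
    then have polar: "z = complex_of_real t * cis (Arg z)"
      using rcis_cmod_Arg[of z] by (simp add: rcis_def)
    then have "\<bar>Arg z\<bar> < a"
      using z less_Re_cis_iff[OF assms(1,2)] Arg_bounded[of z] unfolding a_def by (metis less_le mem_Collect_eq)
    with polar show "z \<in> (\<lambda>\<phi>. complex_of_real t * cis \<phi>) ` {-a<..<a}" by force
  qed
qed

lemma circle_arc_length_sphere_Re_greater:
  fixes t r :: real
  assumes "0 < t" "\<bar>r\<bar> \<le> t"
  shows "circle_arc_length t {z \<in> sphere 0 t. r < Re z} = 2 * t * arccos (r / t)"
proof -
  define a where "a = arccos (r / t)"
  have a: "0 \<le> a" "a \<le> pi" unfolding a_def using arccos_bounded assms by (auto simp: divide_simps)
  have "{\<phi> \<in> {-pi<..pi}. complex_of_real t * cis \<phi> \<in> {z \<in> sphere 0 t. r < Re z}} = {-a<..<a}"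
    using a less_Re_cis_iff[OF assms] assms(1) unfolding a_def by (auto simp: norm_mult)
  then show ?thesis using a(1) unfolding circle_arc_length_def a_def by simp
qed

lemma slit_height_le_abs_Im_iff:
  fixes \<theta> t :: real and m :: int and z :: complex
  assumes "0 < \<theta>" "\<theta> < pi" "0 < t" "0 < m" "z \<in> sphere 0 t" "Re z = of_int m"
  shows "slit_height \<theta> m \<le> \<bar>Im z\<bar> \<longleftrightarrow> of_int m \<le> t * cos (\<theta>/2)"
proof -
  define c s where "c = cos (\<theta>/2)" and "s = sin (\<theta>/2)"
  have c: "0 < c" unfolding c_def using cos_half_bounds assms by auto
  have "0 < s" unfolding s_def using assms by (intro sin_gt_zero) auto
  have Im_sq: "(Im z)^2 = t^2 - (of_int m)^2"
    using assms(5,6) cmod_power2[of z] by simp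
  have height: "slit_height \<theta> m = of_int m * s / c"
    using assms(4) by (simp add: slit_height_def tan_def c_def s_def)
  have "0 \<le> of_int m * s / c" using assms(4) \<open>0 < s\<close> c by simp
  then have "slit_height \<theta> m \<le> \<bar>Im z\<bar> \<longleftrightarrow> (of_int m * s / c)^2 \<le> (Im z)^2"
    unfolding height by (metis abs_le_square_iff abs_of_nonneg power2_abs)
  also have "\<dots> \<longleftrightarrow> (of_int m)^2 * s^2 \<le> (Im z)^2 * c^2"
    using c by (simp add: power_divide power_mult_distrib divide_le_eq)
  also have "\<dots> \<longleftrightarrow> (of_int m)^2 \<le> (t * c)^2"
  proof -
    have "s^2 = 1 - c^2" unfolding s_def c_def by (simp add: sin_squared_eq)
    then have "(of_int m)^2 * s^2 = (of_int m)^2 - (of_int m)^2 * c^2"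
      by (simp add: right_diff_distrib)
    moreover have "(Im z)^2 * c^2 = t^2 * c^2 - (of_int m)^2 * c^2"
      using Im_sq by (simp add: left_diff_distrib)
    ultimately show ?thesis by (simp add: power_mult_distrib)
  qed
  also have "\<dots> \<longleftrightarrow> of_int m \<le> t * c"
    using assms c by (intro power_mono_iff) auto
  finally show ?thesis unfolding c_def .
qed

lemma sphere_Re_greater_floor_subset_slit_domain:
  fixes \<theta> t :: real
  assumes "0 < \<theta>" "\<theta> < pi" "0 < t"
  shows "{z \<in> sphere 0 t. \<lfloor>t * cos (\<theta>/2)\<rfloor> < Re z} \<subseteq> slit_domain \<theta>"
proof
  fix z assume z: "z \<in> {z \<in> sphere 0 t. \<lfloor>t * cos (\<theta>/2)\<rfloor> < Re z}"
  have "\<not> (Re z = of_int m \<and> slit_height \<theta> m \<le> \<bar>Im z\<bar>)" for m :: int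
  proof
    assume slit: "Re z = of_int m \<and> slit_height \<theta> m \<le> \<bar>Im z\<bar>"
    with z have "\<lfloor>t * cos (\<theta>/2)\<rfloor> < m" by simp
    moreover have "0 \<le> t * cos (\<theta>/2)" using cos_half_bounds[OF assms(1,2)] assms(3) by simp
    ultimately have "0 < m" "\<not> of_int m \<le> t * cos (\<theta>/2)" by linarith+
    then show False using slit_height_le_abs_Im_iff[OF assms, of m z] slit z by auto
  qed
  then show "z \<in> slit_domain \<theta>" unfolding slit_domain_def by auto
qed

lemma sphere_Re_floor_notin_slit_domain:
  fixes \<theta> t :: real
  assumes "0 < \<theta>" "\<theta> < pi" "1 \<le> t * cos (\<theta>/2)"
    and "z \<in> sphere 0 t" "Re z = \<lfloor>t * cos (\<theta>/2)\<rfloor>"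
  shows "z \<notin> slit_domain \<theta>"
proof -
  have "0 < t"
    using zero_less_mult_pos2[of t "cos (\<theta>/2)"] assms(3) cos_half_bounds[OF assms(1,2)] by linarith
  moreover have "0 < \<lfloor>t * cos (\<theta>/2)\<rfloor>" using assms(3) by linarith
  ultimately have "slit_height \<theta> \<lfloor>t * cos (\<theta>/2)\<rfloor> \<le> \<bar>Im z\<bar>"
    using slit_height_le_abs_Im_iff assms by simp
  then show ?thesis using assms(5) unfolding slit_domain_def by auto
qed

lemma connected_component_eq_superlevel:
  fixes f :: "'a::topological_space \<Rightarrow> real"
  assumes "continuous_on S f" "connected (S \<inter> {z. r < f z})"
    and "x \<in> S" "r < f x" "\<forall>z\<in>S. f z \<noteq> r"
  shows "connected_component_set S x = S \<inter> {z. r < f z}"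
proof
  show "S \<inter> {z. r < f z} \<subseteq> connected_component_set S x"
    using assms by (intro connected_component_maximal) auto
  show "connected_component_set S x \<subseteq> S \<inter> {z. r < f z}"
  proof
    fix z assume z: "z \<in> connected_component_set S x"
    define D where "D = connected_component_set S x"
    have D: "D \<subseteq> S" "x \<in> D" "connected (f ` D)"
      unfolding D_def using assms connected_component_subset
      by (auto intro!: connected_continuous_image continuous_on_subset[OF assms(1)])
    have "r < f z"
    proof (rule ccontr)
      assume "\<not> r < f z"
      then have "r \<in> f ` D"
        using connectedD_interval[OF D(3), of "f z" "f x" r] z D(2) assms(4) unfolding D_def by force
      then show False using D(1) assms(5) by auto
    qed
    then show "z \<in> S \<inter> {z. r < f z}" using z connected_component_subset by blast
  qed
qed

lemma arcJ_eq_sphere_Re_greater_floor: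
  fixes \<theta> t :: real
  assumes "0 < \<theta>" "\<theta> < pi" "1 \<le> t * cos (\<theta>/2)"
  defines "n \<equiv> real_of_int \<lfloor>t * cos (\<theta>/2)\<rfloor>"
  shows "arcJ \<theta> t = {z \<in> sphere 0 t. n < Re z}"
proof -
  have c: "0 < cos (\<theta>/2)" "cos (\<theta>/2) < 1" using cos_half_bounds[OF assms(1,2)] .
  then have t: "0 < t" using zero_less_mult_pos2[of t "cos (\<theta>/2)"] assms(3) by linarith
  have n: "0 \<le> n" "n < t"
    unfolding n_def using assms(3) c mult_strict_left_mono[OF c(2) t] by linarith+
  have cap: "slit_domain \<theta> \<inter> sphere 0 t \<inter> {z. n < Re z} = {z \<in> sphere 0 t. n < Re z}"
    using sphere_Re_greater_floor_subset_slit_domain[OF assms(1,2) t] unfolding n_def by auto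
  have "connected ((\<lambda>\<phi>. complex_of_real t * cis \<phi>) ` {-arccos (n/t)<..<arccos (n/t)})"
    by (intro connected_continuous_image continuous_intros) auto
  then have connected: "connected {z \<in> sphere 0 t. n < Re z}"
    using n t sphere_Re_greater_eq_image_cis[OF t, of n] by simp
  have "arcJ \<theta> t = slit_domain \<theta> \<inter> sphere 0 t \<inter> {z. n < Re z}"
    unfolding arcJ_def
  proof (rule connected_component_eq_superlevel)
    show "continuous_on (slit_domain \<theta> \<inter> sphere 0 t) Re" by (intro continuous_intros)
    show "connected (slit_domain \<theta> \<inter> sphere 0 t \<inter> {z. n < Re z})"
      using cap connected by simp
    have "complex_of_real t \<in> {z \<in> sphere 0 t. n < Re z}" using n t by simp
    then show "complex_of_real t \<in> slit_domain \<theta> \<inter> sphere 0 t" "n < Re (complex_of_real t)"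
      using cap by blast+
    show "\<forall>z \<in> slit_domain \<theta> \<inter> sphere 0 t. Re z \<noteq> n"
      using sphere_Re_floor_notin_slit_domain[OF assms(1-3)] unfolding n_def by blast
  qed
  then show ?thesis using cap by simp
qed

lemma Theta_eq_arccos:
  fixes \<theta> t :: real
  assumes "0 < \<theta>" "\<theta> < pi" "1 \<le> t * cos (\<theta>/2)"
  shows "Theta \<theta> t = 2 * arccos (\<lfloor>t * cos (\<theta>/2)\<rfloor> / t)"
proof -
  have c: "0 < cos (\<theta>/2)" "cos (\<theta>/2) < 1" using cos_half_bounds[OF assms(1,2)] .
  then have t: "0 < t" using zero_less_mult_pos2[of t "cos (\<theta>/2)"] assms(3) by linarith
  have "\<bar>real_of_int \<lfloor>t * cos (\<theta>/2)\<rfloor>\<bar> \<le> t"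
    using assms(3) mult_strict_left_mono[OF c(2) t] by linarith
  then have "circle_arc_length t (arcJ \<theta> t) = 2 * t * arccos (\<lfloor>t * cos (\<theta>/2)\<rfloor> / t)"
    unfolding arcJ_eq_sphere_Re_greater_floor[OF assms] by (rule circle_arc_length_sphere_Re_greater[OF t])
  then show ?thesis using t by (simp add: Theta_def)
qed

lemma tendsto_floor_mult_divide_at_top:
  fixes c :: real
  shows "((\<lambda>t. \<lfloor>t * c\<rfloor> / t) \<longlongrightarrow> c) at_top"
proof (rule tendsto_sandwich)
  show "((\<lambda>t. c - inverse t) \<longlongrightarrow> c) at_top"
    using tendsto_diff[OF tendsto_const tendsto_inverse_0_at_top[OF filterlim_ident]] by simp
  show "\<forall>\<^sub>F t in at_top. c - inverse t \<le> \<lfloor>t * c\<rfloor> / t"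
    using eventually_gt_at_top[of 0]
  proof eventually_elim
    case (elim t)
    have "c - inverse t = (t * c - 1) / t" using elim by (simp add: field_simps)
    also have "\<dots> \<le> \<lfloor>t * c\<rfloor> / t" using elim by (intro divide_right_mono) linarith+
    finally show ?case .
  qed
  show "\<forall>\<^sub>F t in at_top. \<lfloor>t * c\<rfloor> / t \<le> c"
    using eventually_gt_at_top[of 0] by eventually_elim (simp add: divide_simps mult.commute)
qed simp

theorem lemma3p2:
  fixes \<theta> :: real
  assumes "0 < \<theta>" and "\<theta> < pi"
  shows "((\<lambda>t. Theta \<theta> t) \<longlongrightarrow> \<theta>) at_top"
proof -
  define c where "c = cos (\<theta>/2)"
  have c: "0 < c" "c < 1" unfolding c_def using cos_half_bounds assms by auto
  have "\<forall>\<^sub>F t in at_top. 2 * arccos (\<lfloor>t * c\<rfloor> / t) = Theta \<theta> t"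
    using eventually_ge_at_top[of "1 / c"]
    by eventually_elim (use c in \<open>simp add: Theta_eq_arccos[OF assms] c_def field_simps\<close>)
  moreover have "((\<lambda>t. 2 * arccos (\<lfloor>t * c\<rfloor> / t)) \<longlongrightarrow> 2 * arccos c) at_top"
    using c by (intro tendsto_mult_left isCont_tendsto_compose[OF isCont_arccos]
        tendsto_floor_mult_divide_at_top) auto
  moreover have "2 * arccos c = \<theta>" unfolding c_def using assms by (simp add: arccos_cos)
  ultimately show ?thesis using Lim_transform_eventually by fastforce
qed

end
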